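(* If $\tau\in\mathcal{L}$ and $C(\tau)$ is a meager subset of the Euclidean space $\mathbb{R}$, then $(\mathbb{R},\tau)$ is a Baire space.
   Context: $\eta$ denotes the Euclidean topology on $\mathbb{R}$. $\mathcal{L}$ denotes the family of all Hausdorff topologies $\tau$ on $\mathbb{R}$ with $\tau\subset\eta$. For $\tau\in\mathcal{L}$ and $a\in\mathbb{R}$ let $\mathcal{N}_\tau(a)$ be the neighborhood filter of $a$ in $(\mathbb{R},\tau)$; $C(\tau)$ is the set of all $a\in\mathbb{R}$ with $\mathcal{N}_\tau(a)\neq\mathcal{N}_\eta(a)$. *)

theory Defs
  imports "HOL-Analysis.Analysis"
begin

definition nbhds :: "'a topology \<Rightarrow> 'a \<Rightarrow> 'a set set" where
  "nbhds X a = {N. \<exists>U. openin X U \<and> a \<in> U \<and> U \<subseteq> N}"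

text \<open>The family L: Hausdorff topologies on the reals coarser than the Euclidean one.\<close>
definition coarser_hausdorff :: "real topology \<Rightarrow> bool" where
  "coarser_hausdorff T \<longleftrightarrow> topspace T = UNIV \<and> Hausdorff_space T \<and>
     (\<forall>U. openin T U \<longrightarrow> open U)"

definition Cset :: "real topology \<Rightarrow> real set" where
  "Cset T = {a. nbhds T a \<noteq> nbhds euclidean a}"

definition nowhere_dense_in :: "'a topology \<Rightarrow> 'a set \<Rightarrow> bool" where
  "nowhere_dense_in X S \<longleftrightarrow> S \<subseteq> topspace X \<and> X interior_of (X closure_of S) = {}"

definition meager_in :: "'a topology \<Rightarrow> 'a set \<Rightarrow> bool" where
  "meager_in X S \<longleftrightarrow> (\<exists>\<G>. countable \<G> \<and> (\<forall>N\<in>\<G>. nowhere_dense_in X N) \<and> S \<subseteq> \<Union>\<G>)"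

definition baire_space :: "'a topology \<Rightarrow> bool" where
  "baire_space X \<longleftrightarrow> (\<forall>\<G>. countable \<G> \<and>
      (\<forall>U\<in>\<G>. openin X U \<and> X closure_of U = topspace X) \<longrightarrow>
      X closure_of (topspace X \<inter> \<Inter>\<G>) = topspace X)"

end

theory Submission
  imports Defs
begin

text \<open>
  Call a point good if its \<open>\<tau>\<close>-neighbourhoods are exactly its Euclidean ones. Since \<open>C(\<tau>)\<close> is
  meager, the Baire category theorem for \<open>\<real>\<close> makes the good points Euclidean-dense. A
  \<open>\<tau>\<close>-dense set \<open>U\<close> then meets every nonempty Euclidean open \<open>V\<close>: \<open>V\<close> contains a good point
  \<open>a\<close>, so it is a \<open>\<tau>\<close>-neighbourhood of \<open>a\<close>. Hence the \<open>\<tau>\<close>-dense \<open>\<tau>\<close>-open sets are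
  Euclidean-dense open, their countable intersections are Euclidean-dense by Baire's theorem,
  and a fortiori \<open>\<tau>\<close>-dense because \<open>\<tau>\<close> is coarser.
\<close>

lemma baire_space_if_Baire_category:
  assumes "completely_metrizable_space X \<or> locally_compact_space X \<and> regular_space X"
  shows "baire_space X"
  unfolding baire_space_def
  using Baire_category [OF assms] by (metis closure_of_restrict)

lemma meager_in_imp_interior_of_empty:
  assumes "completely_metrizable_space X \<or> locally_compact_space X \<and> regular_space X"
    and "meager_in X S"
  shows "X interior_of S = {}"
proof -
  obtain \<G> where "countable \<G>" and nowhere_dense: "\<And>N. N \<in> \<G> \<Longrightarrow> nowhere_dense_in X N"
    and "S \<subseteq> \<Union>\<G>"
    using assms(2) unfolding meager_in_def by blast
  have "X interior_of \<Union>((closure_of) X ` \<G>) = {}"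
  proof (rule Baire_category_alt [OF assms(1)])
    show "countable ((closure_of) X ` \<G>)"
      using \<open>countable \<G>\<close> by blast
  next
    fix C assume "C \<in> (closure_of) X ` \<G>"
    then show "closedin X C \<and> X interior_of C = {}"
      using nowhere_dense unfolding nowhere_dense_in_def by auto
  qed
  moreover have "N \<subseteq> X closure_of N" if "N \<in> \<G>" for N
    using nowhere_dense [OF that] closure_of_subset unfolding nowhere_dense_in_def by blast
  then have "S \<subseteq> \<Union>((closure_of) X ` \<G>)"
    using \<open>S \<subseteq> \<Union>\<G>\<close> by blast
  ultimately show ?thesis
    using interior_of_mono by (metis subset_empty)
qed

lemma dense_in_coarser_topology:
  assumes "topspace X = topspace Y" and "\<And>U. openin X U \<Longrightarrow> openin Y U"
    and "Y closure_of S = topspace Y"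
  shows "X closure_of S = topspace X"
proof -
  have "x \<in> X closure_of S" if "x \<in> topspace X" for x
  proof -
    have "x \<in> Y closure_of S"
      using that assms(1,3) by simp
    then show ?thesis
      using that assms(2) unfolding in_closure_of by blast
  qed
  then show ?thesis
    by (meson closure_of_subset_topspace subsetI subset_antisym)
qed

lemma dense_in_finer_topology:
  assumes "topspace X = topspace Y"
    and "Y interior_of {a. nbhds X a \<noteq> nbhds Y a} = {}"
    and "X closure_of U = topspace X"
  shows "Y closure_of U = topspace Y"
proof -
  have "V \<inter> U \<noteq> {}" if "openin Y V" and "y \<in> V" for V y
  proof -
    have "\<not> V \<subseteq> {a. nbhds X a \<noteq> nbhds Y a}"
      using assms(2) interior_of_maximal \<open>openin Y V\<close> \<open>y \<in> V\<close> by blast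
    then obtain a where "a \<in> V" and "nbhds X a = nbhds Y a"
      by blast
    then have "V \<in> nbhds X a"
      using \<open>openin Y V\<close> unfolding nbhds_def by auto
    then obtain W where "openin X W" "a \<in> W" "W \<subseteq> V"
      unfolding nbhds_def by auto
    moreover have "a \<in> X closure_of U"
      using assms(3) \<open>openin X W\<close> \<open>a \<in> W\<close> openin_subset by blast
    ultimately show ?thesis
      unfolding in_closure_of by blast
  qed
  then have "y \<in> Y closure_of U" if "y \<in> topspace Y" for y
    using that unfolding in_closure_of by blast
  then show ?thesis
    by (meson closure_of_subset_topspace subsetI subset_antisym)
qed

lemma baire_space_coarser_topology:
  assumes "baire_space Y" and "topspace X = topspace Y"
    and "\<And>U. openin X U \<Longrightarrow> openin Y U"
    and "Y interior_of {a. nbhds X a \<noteq> nbhds Y a} = {}"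
  shows "baire_space X"
  unfolding baire_space_def
proof (intro allI impI)
  fix \<G> assume \<G>: "countable \<G> \<and> (\<forall>U\<in>\<G>. openin X U \<and> X closure_of U = topspace X)"
  have "openin Y U \<and> Y closure_of U = topspace Y" if "U \<in> \<G>" for U
    using \<G> that assms(3) dense_in_finer_topology [OF assms(2,4)] by blast
  then have "Y closure_of (topspace Y \<inter> \<Inter>\<G>) = topspace Y"
    using assms(1) \<G> unfolding baire_space_def by (simp add: Ball_def)
  then show "X closure_of (topspace X \<inter> \<Inter>\<G>) = topspace X"
    using dense_in_coarser_topology [OF assms(2,3)] assms(2) by simp
qed

theorem proposition4:
  fixes T :: "real topology"
  assumes "coarser_hausdorff T"
    and "meager_in euclidean (Cset T)"
  shows "baire_space T"
proof (rule baire_space_coarser_topology)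
  have complete: "completely_metrizable_space (euclidean :: real topology)"
    by (rule completely_metrizable_space_euclidean)
  then show "baire_space (euclidean :: real topology)"
    by (simp add: baire_space_if_Baire_category)
  show "euclidean interior_of {a. nbhds T a \<noteq> nbhds euclidean a} = {}"
    using meager_in_imp_interior_of_empty [OF _ assms(2)] complete
    unfolding Cset_def by blast
  show "topspace T = topspace euclidean" and "\<And>U. openin T U \<Longrightarrow> openin euclidean U"
    using assms(1) unfolding coarser_hausdorff_def by auto
qed

end
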